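(* Let $n,k,l$ be nonnegative integers with $k+l\le n$, $\alpha,\beta>-1$, $\sigma:=\alpha+\beta+1$, and let $C_{ij}$ ($k\le i,j\le n-l$) be the B\'ezier coefficients of the constrained dual Bernstein polynomials, $D^{(n,k,l)}_i(x;\alpha,\beta)=\sum_{j=k}^{n-l}C_{ij}B^n_j(x)$. Then \[ C_{k,n-l}=\binom{n}{k}^{-1}\binom{n}{l}^{-1}\frac{(-1)^{n-k-l}(\sigma+2k+2l+1)_{n-k-l}}{B(\alpha+2l+1,\beta+2k+1)\,(n-k-l)!}, \] and for $j=n-l-1,n-l-2,\ldots,k$, \[ C_{kj}=\frac{(j-n)(j-k+1)(j+\beta+k+2)}{(j+1)(j-n+l)(j-\alpha-l-n)}\,C_{k,j+1}. \]
   Context: For $\alpha,\beta>-1$ define $\langle f,g\rangle:=\int_0^1(1-x)^{\alpha}x^{\beta}f(x)g(x)\,dx$. Bernstein polynomials: $B^n_i(x)=\binom ni x^i(1-x)^{n-i}$. For $k+l\le n$, $\Pi_n^{(k,l)}$ is the space of polynomials $P$ of degree $\le n$ with $P^{(i)}(0)=0$ for $0\le i\le k-1$ and $P^{(j)}(1)=0$ for $0\le j\le l-1$; it has basis $B^n_k,\ldots,B^n_{n-l}$. The constrained dual Bernstein polynomials $D^{(n,k,l)}_i(x;\alpha,\beta)$, $k\le i\le n-l$, are the unique elements of $\Pi_n^{(k,l)}$ with $\langle D^{(n,k,l)}_i,B^n_j\rangle=\delta_{ij}$ for $i,j=k,\ldots,n-l$. Notation: $(c)_k:=\prod_{j=0}^{k-1}(c+j)$;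 $B(\lambda,\mu)=\Gamma(\lambda)\Gamma(\mu)/\Gamma(\lambda+\mu)$. *)

theory Defs
  imports "HOL-Analysis.Analysis" "HOL-Computational_Algebra.Polynomial"
begin

definition jac_ip :: "real \<Rightarrow> real \<Rightarrow> real poly \<Rightarrow> real poly \<Rightarrow> real" where
  "jac_ip \<alpha> \<beta> f g =
     (LINT x:{0<..<1}|lborel. (1 - x) powr \<alpha> * x powr \<beta> * poly f x * poly g x)"

definition bernstein :: "nat \<Rightarrow> nat \<Rightarrow> real poly" where
  "bernstein n i = smult (real (n choose i)) (monom 1 i * [:1, -1:] ^ (n - i))"

definition Pi_space :: "nat \<Rightarrow> nat \<Rightarrow> nat \<Rightarrow> real poly set" where
  "Pi_space n k l = {p. degree p \<le> n \<and>
      (\<forall>i<k. poly ((pderiv ^^ i) p) 0 = 0) \<and>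
      (\<forall>j<l. poly ((pderiv ^^ j) p) 1 = 0)}"

definition dual_bernstein :: "nat \<Rightarrow> nat \<Rightarrow> nat \<Rightarrow> real \<Rightarrow> real \<Rightarrow> nat \<Rightarrow> real poly" where
  "dual_bernstein n k l \<alpha> \<beta> i =
     (THE P. P \<in> Pi_space n k l \<and>
        (\<forall>j\<in>{k..n-l}. jac_ip \<alpha> \<beta> P (bernstein n j) = (if i = j then 1 else 0)))"

definition dual_coeff :: "nat \<Rightarrow> nat \<Rightarrow> nat \<Rightarrow> real \<Rightarrow> real \<Rightarrow> nat \<Rightarrow> nat \<Rightarrow> real" where
  "dual_coeff n k l \<alpha> \<beta> i =
     (THE c. (\<forall>j. j \<notin> {k..n-l} \<longrightarrow> c j = 0) \<and>
        dual_bernstein n k l \<alpha> \<beta> i = (\<Sum>j=k..n-l. smult (c j) (bernstein n j)))"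

end

theory Submission
  imports Defs
begin

text \<open>
  Write \<open>a = \<alpha>+2l+1\<close>, \<open>b = \<beta>+2k+1\<close>, \<open>m = n-k-l\<close>. We exhibit the
  dual polynomial \<open>D\<^sub>k\<close> explicitly: its Bezier coefficients are
  \<open>C\<^sub>k\<^sub>j = E \<cdot> (-1)^p (m choose p) (a+m-p)\<^sub>p / ((b+1)\<^sub>p (n choose j))\<close> with \<open>p = j-k\<close> and an
  explicit normalising constant \<open>E\<close>. Both claims of the theorem are then direct
  computations with these coefficients.
\<close>

lemma alternating_binomial_sum_Suc:
  fixes f :: "nat \<Rightarrow> real"
  shows "(\<Sum>p\<le>Suc m. (-1)^p * real (Suc m choose p) * f p) =
         (\<Sum>p\<le>m. (-1)^p * real (m choose p) * f p) - (\<Sum>p\<le>m. (-1)^p * real (m choose p) * f (Suc p))"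
proof -
  have split: "(\<Sum>p\<le>Suc m. (-1)^p * real (Suc m choose p) * f p) =
        f 0 + (\<Sum>p\<le>m. (-1)^(Suc p) * real (m choose p) * f (Suc p))
            + (\<Sum>p\<le>m. (-1)^(Suc p) * real (m choose Suc p) * f (Suc p))"
    by (subst sum.atMost_Suc_shift) (simp add: sum.distrib[symmetric] ring_distribs)
  have unshift: "f 0 + (\<Sum>p\<le>m. (-1)^(Suc p) * real (m choose Suc p) * f (Suc p)) =
                 (\<Sum>p\<le>Suc m. (-1)^p * real (m choose p) * f p)"
    by (subst sum.atMost_Suc_shift) simp
  show ?thesis unfolding split using unshift by (simp add: sum_negf)
qed

lemma forward_difference_degree:
  fixes f :: "real poly"
  defines "g \<equiv> f - f \<circ>\<^sub>p [:1,1:]"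
  shows "g = 0 \<or> degree g < degree f"
proof (cases "degree f = 0")
  case True
  then obtain c where "f = [:c:]" by (metis degree_eq_zeroE)
  then show ?thesis by (simp add: g_def)
next
  case False
  have deg: "degree (f \<circ>\<^sub>p [:1,1:]) = degree f" by (simp add: degree_pcompose)
  have "lead_coeff (f \<circ>\<^sub>p [:1,1:]) = lead_coeff f" by (simp add: lead_coeff_comp)
  then have top: "coeff g (degree f) = 0" unfolding g_def using deg by simp
  have "degree g \<le> degree f"
    unfolding g_def using degree_diff_le[of f "degree f" "f \<circ>\<^sub>p [:1,1:]"] deg by simp
  then show ?thesis using top by (metis le_neq_implies_less leading_coeff_0_iff)
qed

lemma finite_difference_poly_vanishes:
  fixes f :: "real poly"
  assumes "f = 0 \<or> degree f < m"
  shows "(\<Sum>p\<le>m. (-1)^p * real (m choose p) * poly f (real p)) = 0"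
  using assms
proof (induction m arbitrary: f)
  case 0
  then show ?case by simp
next
  case (Suc m)
  define g where "g = f - f \<circ>\<^sub>p [:1,1:]"
  have "g = 0 \<or> degree g < m"
    using forward_difference_degree[of f] Suc.prems unfolding g_def by auto
  then have IH: "(\<Sum>p\<le>m. (-1)^p * real (m choose p) * poly g (real p)) = 0" by (rule Suc.IH)
  have "(\<Sum>p\<le>Suc m. (-1)^p * real (Suc m choose p) * poly f (real p)) =
        (\<Sum>p\<le>m. (-1)^p * real (m choose p) * poly f (real p))
      - (\<Sum>p\<le>m. (-1)^p * real (m choose p) * poly f (real (Suc p)))"
    by (rule alternating_binomial_sum_Suc)
  also have "\<dots> = (\<Sum>p\<le>m. (-1)^p * real (m choose p) * poly g (real p))"
    by (simp add: g_def poly_pcompose sum_subtractf[symmetric] algebra_simps)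
  finally show ?case using IH by simp
qed

lemma alternating_binomial_sum_reciprocal:
  fixes x :: real
  assumes "x > 0"
  shows "(\<Sum>p\<le>m. (-1)^p * real (m choose p) * (1 / (x + real p))) = fact m / pochhammer x (Suc m)"
  using assms
proof (induction m arbitrary: x)
  case 0
  then show ?case by simp
next
  case (Suc m)
  have shift: "(\<Sum>p\<le>m. (-1)^p * real (m choose p) * (1 / (x + real (Suc p)))) =
               (\<Sum>p\<le>m. (-1)^p * real (m choose p) * (1 / ((x + 1) + real p)))"
    by (simp add: algebra_simps)
  have "(\<Sum>p\<le>Suc m. (-1)^p * real (Suc m choose p) * (1 / (x + real p))) =
        fact m / pochhammer x (Suc m) - fact m / pochhammer (x+1) (Suc m)"
    unfolding alternating_binomial_sum_Suc shift
    using Suc.IH[of x] Suc.IH[of "x+1"] Suc.prems by (simp only:)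
  also have "\<dots> = fact (Suc m) / pochhammer x (Suc (Suc m))"
  proof -
    have pos: "pochhammer x (Suc m) > 0" using Suc.prems by (intro pochhammer_pos)
    have "x * pochhammer (x+1) (Suc m) = pochhammer x (Suc m) * (x + real (Suc m))"
      by (metis pochhammer_Suc pochhammer_rec of_nat_Suc)
    then have rise_shift: "pochhammer (x+1) (Suc m) = pochhammer x (Suc m) * (x + real (Suc m)) / x"
      using Suc.prems by (simp add: field_simps)
    have rise_Suc: "pochhammer x (Suc (Suc m)) = pochhammer x (Suc m) * (x + real (Suc m))"
      by (rule pochhammer_Suc)
    have combine: "F / Q - F / (Q * (x + M) / x) = F * M / (Q * (x + M))"
      if "Q > 0" "M > 0" for F Q M :: real
    proof -
      have "0 < M * Q + Q * x" using that Suc.prems by (simp add: add_pos_pos)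
      then show ?thesis using that Suc.prems by (simp add: field_simps)
    qed
    show ?thesis unfolding rise_shift rise_Suc using combine[OF pos, of "real (Suc m)" "fact m"]
      by (simp add: fact_Suc mult.commute)
  qed
  finally show ?case .
qed

lemma Beta_pos_real: "a > 0 \<Longrightarrow> b > 0 \<Longrightarrow> Beta a b > (0::real)"
  unfolding Beta_def by simp

lemma Beta_shift_nat:
  fixes a b :: real
  assumes "a > 0" "b > 0"
  shows "Beta (a + real r) (b + real s) =
         Beta a b * pochhammer a r * pochhammer b s / pochhammer (a + b) (r + s)"
proof (induction r)
  case 0
  show ?case
  proof (induction s)
    case 0 then show ?case by simp
  next
    case (Suc s)
    have nz: "b + real s \<notin> \<int>\<^sub>\<le>\<^sub>0" using assms by (auto elim!: nonpos_Ints_cases)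
    have "(a + (b + real s)) * Beta a (b + real s + 1) = (b + real s) * Beta a (b + real s)"
      by (rule Beta_plus1_right[OF nz])
    then have "Beta a (b + real (Suc s)) = (b + real s) / (a + b + real s) * Beta a (b + real s)"
      using assms by (simp add: field_simps)
    also have "Beta a (b + real s) = Beta a b * pochhammer b s / pochhammer (a + b) s"
      using Suc.IH by simp
    finally show ?case using assms by (simp add: pochhammer_Suc field_simps)
  qed
next
  case (Suc r)
  have nz: "a + real r \<notin> \<int>\<^sub>\<le>\<^sub>0" using assms by (auto elim!: nonpos_Ints_cases)
  have "(a + real r + (b + real s)) * Beta (a + real r + 1) (b + real s) =
        (a + real r) * Beta (a + real r) (b + real s)"
    by (rule Beta_plus1_left[OF nz])
  then have "Beta (a + real (Suc r)) (b + real s) =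
             (a + real r) / (a + b + real (r + s)) * Beta (a + real r) (b + real s)"
    using assms by (simp add: field_simps)
  also note Suc.IH
  finally show ?case using assms by (simp add: pochhammer_Suc field_simps)
qed

text \<open>The Jacobi functional \<open>I(p) = \<integral>\<^sub>0\<^sup>1 (1-x)^\<alpha> x^\<beta> p(x) dx\<close>; the inner product is
  \<open>\<langle>f,g\<rangle> = I(f g)\<close>, so linearity and the Gram matrix of the Bernstein basis reduce to
  properties of \<open>I\<close>.\<close>
definition jacobi_integral :: "real \<Rightarrow> real \<Rightarrow> real poly \<Rightarrow> real" where
  "jacobi_integral \<alpha> \<beta> p = (LINT x:{0<..<1}|lborel. (1 - x) powr \<alpha> * x powr \<beta> * poly p x)"

lemma jac_ip_eq_jacobi_integral: "jac_ip \<alpha> \<beta> f g = jacobi_integral \<alpha> \<beta> (f * g)"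
  unfolding jac_ip_def jacobi_integral_def by (simp add: mult_ac)

lemma jacobi_weight_monomial:
  fixes \<alpha> \<beta> :: real
  assumes "\<alpha> > -1" "\<beta> > -1"
  shows "set_integrable lborel {0<..<1} (\<lambda>x. (1-x) powr \<alpha> * x powr \<beta> * (x^r * (1-x)^s))"
    and "(LINT x:{0<..<1}|lborel. (1-x) powr \<alpha> * x powr \<beta> * (x^r * (1-x)^s)) =
         Beta (\<beta> + real r + 1) (\<alpha> + real s + 1)"
proof -
  have a: "\<beta> + real r + 1 > 0" and b: "\<alpha> + real s + 1 > 0" using assms by auto
  have eq: "x powr (\<beta> + real r) * (1-x) powr (\<alpha> + real s) = (1-x) powr \<alpha> * x powr \<beta> * (x^r * (1-x)^s)"
    if "x \<in> {0<..<1}" for x :: real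
    using that by (simp add: powr_add powr_realpow mult_ac)
  have "set_integrable lborel {0..1} (\<lambda>t. t powr (\<beta> + real r) * (1-t) powr (\<alpha> + real s))"
    using integrable_Beta[OF a b] by simp
  then have int: "set_integrable lborel {0<..<1} (\<lambda>t. t powr (\<beta> + real r) * (1-t) powr (\<alpha> + real s))"
    by (rule set_integrable_subset) auto
  moreover have "set_integrable lborel {0<..<1} (\<lambda>t. t powr (\<beta> + real r) * (1-t) powr (\<alpha> + real s)) =
        set_integrable lborel {0<..<1} (\<lambda>x. (1-x) powr \<alpha> * x powr \<beta> * (x^r * (1-x)^s))"
    by (rule set_integrable_cong) (auto simp: eq)
  ultimately show "set_integrable lborel {0<..<1} (\<lambda>x. (1-x) powr \<alpha> * x powr \<beta> * (x^r * (1-x)^s))"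
    by simp
  have "(LINT x:{0<..<1}|lborel. (1-x) powr \<alpha> * x powr \<beta> * (x^r * (1-x)^s)) =
        (LINT x:{0<..<1}|lborel. x powr (\<beta> + real r) * (1-x) powr (\<alpha> + real s))"
    by (rule set_lebesgue_integral_cong) (auto simp: eq)
  also have "\<dots> = integral {0<..<1} (\<lambda>x. x powr (\<beta> + real r) * (1-x) powr (\<alpha> + real s))"
    by (rule set_borel_integral_eq_integral(2)[OF int])
  also have "\<dots> = Beta (\<beta> + real r + 1) (\<alpha> + real s + 1)"
    using has_integral_Icc_iff_Ioo[THEN iffD1, OF has_integral_Beta_real[OF a b]]
    by (simp add: integral_unique)
  finally show "(LINT x:{0<..<1}|lborel. (1-x) powr \<alpha> * x powr \<beta> * (x^r * (1-x)^s)) =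
                Beta (\<beta> + real r + 1) (\<alpha> + real s + 1)" .
qed

lemma jacobi_integral_monomial:
  assumes "\<alpha> > -1" "\<beta> > -1"
  shows "jacobi_integral \<alpha> \<beta> (monom 1 r * [:1,-1:]^s) = Beta (\<beta> + real r + 1) (\<alpha> + real s + 1)"
  unfolding jacobi_integral_def using jacobi_weight_monomial(2)[OF assms, of r s]
  by (simp add: poly_monom)

lemma jacobi_integrable:
  fixes \<alpha> \<beta> :: real
  assumes "\<alpha> > -1" "\<beta> > -1"
  shows "set_integrable lborel {0<..<1} (\<lambda>x. (1 - x) powr \<alpha> * x powr \<beta> * poly p x)"
proof -
  have expand: "(\<lambda>x. indicator {0<..<1} x *\<^sub>R ((1 - x) powr \<alpha> * x powr \<beta> * poly p x)) =
        (\<lambda>x. \<Sum>i\<le>degree p. coeff p i *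
               (indicator {0<..<1} x *\<^sub>R ((1-x) powr \<alpha> * x powr \<beta> * (x^i * (1-x)^0))))"
    by (rule ext) (simp add: poly_altdef sum_distrib_left sum_distrib_right mult_ac)
  show ?thesis unfolding set_integrable_def expand
    using jacobi_weight_monomial(1)[OF assms] unfolding set_integrable_def
    by (intro Bochner_Integration.integrable_sum integrable_mult_right) blast
qed

lemma jacobi_integral_add:
  assumes "\<alpha> > -1" "\<beta> > -1"
  shows "jacobi_integral \<alpha> \<beta> (p + q) = jacobi_integral \<alpha> \<beta> p + jacobi_integral \<alpha> \<beta> q"
  unfolding jacobi_integral_def using jacobi_integrable[OF assms, of p] jacobi_integrable[OF assms, of q]
  by (simp add: distrib_left)

lemma jacobi_integral_smult: "jacobi_integral \<alpha> \<beta> (smult c p) = c * jacobi_integral \<alpha> \<beta> p"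
  unfolding jacobi_integral_def by (simp add: mult_ac)

lemma jacobi_integral_diff:
  assumes "\<alpha> > -1" "\<beta> > -1"
  shows "jacobi_integral \<alpha> \<beta> (p - q) = jacobi_integral \<alpha> \<beta> p - jacobi_integral \<alpha> \<beta> q"
  using jacobi_integral_add[OF assms, of p "smult (-1) q"] jacobi_integral_smult[of \<alpha> \<beta> "-1" q]
  by simp

lemma jacobi_integral_sum:
  assumes "\<alpha> > -1" "\<beta> > -1"
  shows "jacobi_integral \<alpha> \<beta> (\<Sum>j\<in>S. f j) = (\<Sum>j\<in>S. jacobi_integral \<alpha> \<beta> (f j))"
proof (induction S rule: infinite_finite_induct)
  case (infinite A)
  then show ?case by (simp add: jacobi_integral_def)
next
  case empty
  then show ?case by (simp add: jacobi_integral_def)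
next
  case (insert x F)
  then show ?case by (simp add: jacobi_integral_add[OF assms])
qed

text \<open>The inner product is definite: \<open>I(p\<^sup>2) = 0\<close> forces \<open>p = 0\<close>, since otherwise the
  integrand is positive off the finitely many roots of \<open>p\<close>.\<close>
lemma jacobi_integral_square_eq_0:
  fixes \<alpha> \<beta> :: real
  assumes "\<alpha> > -1" "\<beta> > -1" "jacobi_integral \<alpha> \<beta> (p * p) = 0"
  shows "p = 0"
proof (rule ccontr)
  assume p: "p \<noteq> 0"
  define f where "f = (\<lambda>x. indicator {0<..<1} x *\<^sub>R ((1 - x) powr \<alpha> * x powr \<beta> * poly (p*p) x))"
  have int: "integrable lborel f"
    using jacobi_integrable[OF assms(1,2), of "p*p"] unfolding f_def set_integrable_def .
  have nonneg: "AE x in lborel. 0 \<le> f x" unfolding f_def by (auto simp: indicator_def)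
  have "integral\<^sup>L lborel f = 0"
    using assms(3) unfolding jacobi_integral_def f_def set_lebesgue_integral_def .
  then have f0: "AE x in lborel. f x = 0" using integral_nonneg_eq_0_iff_AE[OF int nonneg] by simp
  have "AE x in lborel. x \<notin> {x. poly p x = 0}"
    by (rule AE_not_in[OF finite_imp_null_set_lborel[OF poly_roots_finite[OF p]]])
  with f0 have "AE x in lborel. x \<notin> {0<..<1::real}"
    by eventually_elim (auto simp: f_def indicator_def)
  then have "emeasure lborel {0<..<1::real} = 0"
    by (subst (asm) AE_iff_measurable[of "{0<..<1}"]) auto
  then show False by simp
qed

lemma power_linear_dvd_pderiv:
  fixes p :: "real poly"
  assumes "[:-a,1:]^(Suc k) dvd p"
  shows "[:-a,1:]^k dvd pderiv p"
proof -
  obtain q where q: "p = [:-a,1:]^(Suc k) * q" using assms by (rule dvdE)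
  have "pderiv p = [:-a,1:]^k * (smult (of_nat (Suc k)) (pderiv [:-a,1:] * q) + [:-a,1:] * pderiv q)"
    unfolding q pderiv_mult pderiv_power_Suc by (simp add: algebra_simps)
  then show ?thesis by simp
qed

lemma higher_pderivs_vanish_iff_dvd:
  fixes p :: "real poly"
  shows "(\<forall>i<k. poly ((pderiv^^i) p) a = 0) \<longleftrightarrow> [:-a,1:]^k dvd p"
proof (induction k arbitrary: p)
  case 0
  then show ?case by simp
next
  case (Suc k)
  have "(pderiv^^i) (pderiv p) = (pderiv^^(Suc i)) p" for i
    by (simp only: funpow_Suc_right comp_def)
  then have shift: "(\<forall>i<Suc k. poly ((pderiv^^i) p) a = 0) \<longleftrightarrow>
               poly p a = 0 \<and> (\<forall>i<k. poly ((pderiv^^i) (pderiv p)) a = 0)"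
    by (simp only: All_less_Suc2 funpow_0)
  show ?case
  proof
    assume "\<forall>i<Suc k. poly ((pderiv^^i) p) a = 0"
    then have root: "poly p a = 0" and "[:-a,1:]^k dvd pderiv p" using shift Suc.IH by auto
    show "[:-a,1:]^Suc k dvd p"
    proof (cases "p = 0 \<or> pderiv p = 0")
      case True
      then have "p = 0" using root by (auto simp: pderiv_eq_0_iff elim: degree_eq_zeroE)
      then show ?thesis by simp
    next
      case False
      then have "order a p = Suc (order a (pderiv p))" and "k \<le> order a (pderiv p)"
        using root \<open>[:-a,1:]^k dvd pderiv p\<close> by (auto simp: order_pderiv order_divides)
      then have "Suc k \<le> order a p" by simp
      then show ?thesis by (subst order_divides) simp
    qed
  next
    assume d: "[:-a,1:]^Suc k dvd p"
    then have "[:-a,1:] dvd p" by (meson dvd_power dvd_trans zero_less_Suc)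
    then have "poly p a = 0" by (simp add: poly_eq_0_iff_dvd)
    moreover have "\<forall>i<k. poly ((pderiv^^i) (pderiv p)) a = 0"
      using Suc.IH power_linear_dvd_pderiv[OF d] by blast
    ultimately show "\<forall>i<Suc k. poly ((pderiv^^i) p) a = 0" using shift by blast
  qed
qed

lemma Pi_space_dvd_iff:
  "Pi_space n k l = {p. degree p \<le> n \<and> [:0,1:]^k dvd p \<and> [:-1,1:]^l dvd p}"
  unfolding Pi_space_def
  using higher_pderivs_vanish_iff_dvd[of k _ 0] higher_pderivs_vanish_iff_dvd[of l _ 1] by auto

lemma Pi_space_diff:
  "p \<in> Pi_space n k l \<Longrightarrow> q \<in> Pi_space n k l \<Longrightarrow> p - q \<in> Pi_space n k l"
  unfolding Pi_space_dvd_iff by (auto intro: dvd_diff order.trans[OF degree_diff_le])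

lemma Pi_space_smult: "p \<in> Pi_space n k l \<Longrightarrow> smult c p \<in> Pi_space n k l"
  unfolding Pi_space_dvd_iff by (auto intro: dvd_smult)

lemma Pi_space_sum:
  "(\<And>j. j \<in> S \<Longrightarrow> f j \<in> Pi_space n k l) \<Longrightarrow> (\<Sum>j\<in>S. f j) \<in> Pi_space n k l"
  by (induction S rule: infinite_finite_induct)
     (auto simp: Pi_space_dvd_iff intro!: dvd_add degree_add_le)

lemma Pi_space_factor:
  fixes P :: "real poly"
  assumes "P \<in> Pi_space n k l" "P \<noteq> 0"
  obtains Q where "P = [:0,1:]^k * [:-1,1:]^l * Q" "degree Q \<le> n - k - l"
proof -
  from assms(1) have deg: "degree P \<le> n" and d0: "[:0,1:]^k dvd P" and d1: "[:-1,1:]^l dvd P"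
    unfolding Pi_space_dvd_iff by auto
  obtain R where R: "P = [:0,1:]^k * R" using d0 by (rule dvdE)
  have "order 1 (([:0,1:]::real poly)^k) = 0" by (rule order_0I) simp
  then have "order 1 R = order 1 P" using assms(2) unfolding R by (simp add: order_mult)
  then have "[:-1,1:]^l dvd R" using d1 assms(2) R by (simp add: order_divides)
  then obtain Q where Q: "R = [:-1,1:]^l * Q" by (rule dvdE)
  have P: "P = [:0,1:]^k * [:-1,1:]^l * Q" using R Q by (simp add: mult_ac)
  with assms(2) have "degree P = k + l + degree Q"
    by (auto simp: degree_mult_eq degree_linear_power)
  with deg P show ?thesis by (intro that) auto
qed

lemma bernstein_mult:
  assumes "i \<le> n" "j \<le> n"
  shows "bernstein n i * bernstein n j =
         smult (real (n choose i) * real (n choose j)) (monom 1 (i + j) * [:1,-1:]^(2*n - i - j))"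
proof -
  have "2*n - i - j = (n - i) + (n - j)" using assms by simp
  moreover have "monom (1::real) (i+j) = monom 1 i * monom 1 j" by (simp add: mult_monom)
  ultimately show ?thesis unfolding bernstein_def by (simp add: power_add mult_ac)
qed

lemma jac_ip_bernstein:
  assumes "\<alpha> > -1" "\<beta> > -1" "i \<le> n" "j \<le> n"
  shows "jac_ip \<alpha> \<beta> (bernstein n i) (bernstein n j) =
     real (n choose i) * real (n choose j) * Beta (\<beta> + real (i + j) + 1) (\<alpha> + real (2*n - i - j) + 1)"
  unfolding jac_ip_eq_jacobi_integral bernstein_mult[OF assms(3,4)] jacobi_integral_smult
    jacobi_integral_monomial[OF assms(1,2)] by simp

lemma bernstein_in_Pi_space:
  assumes "k \<le> j" "j + l \<le> n"
  shows "bernstein n j \<in> Pi_space n k l"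
proof -
  have "degree (monom (1::real) j * [:1,-1:]^(n-j)) \<le> j + (n - j)"
    by (rule order.trans[OF degree_mult_le])
       (simp add: degree_monom_eq order.trans[OF degree_power_le])
  then have deg: "degree (bernstein n j) \<le> n"
    unfolding bernstein_def using assms by (intro order.trans[OF degree_smult_le]) simp
  have "[:0,1:]^k dvd (monom (1::real) j)" unfolding monom_altdef using assms by (simp add: le_imp_power_dvd)
  then have at0: "[:0,1:]^k dvd bernstein n j" unfolding bernstein_def by (intro dvd_smult dvd_mult2)
  have "[:-1,1:]^l dvd ([:-1,1:]::real poly)^(n-j)" using assms by (simp add: le_imp_power_dvd)
  then have "[:-1,1:]^l dvd ([:-1,1:] * [:-1::real:])^(n-j)" unfolding power_mult_distrib by simp
  then have "[:-1,1:]^l dvd ([:1,-1:]::real poly)^(n-j)" by simp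
  then have at1: "[:-1,1:]^l dvd bernstein n j" unfolding bernstein_def by (intro dvd_smult dvd_mult)
  show ?thesis unfolding Pi_space_dvd_iff using deg at0 at1 by simp
qed

text \<open>Coefficients w.r.t. \<open>B\<^sup>n\<^sub>k, \<dots>, B\<^sup>n\<^sub>n\<^sub>-\<^sub>l\<close> are unique: look at the coefficient of
  the lowest power \<open>x^j\<close> with a nonzero Bernstein coefficient.\<close>
lemma bernstein_combination_eq_0:
  fixes c :: "nat \<Rightarrow> real"
  assumes supp: "\<forall>j. j \<notin> {k..n-l} \<longrightarrow> c j = 0"
    and zero: "(\<Sum>j=k..n-l. smult (c j) (bernstein n j)) = 0"
  shows "c j = 0"
proof (rule ccontr)
  assume "c j \<noteq> 0"
  define S where "S = {j\<in>{k..n-l}. c j \<noteq> 0}"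
  have "j \<in> S" using \<open>c j \<noteq> 0\<close> supp unfolding S_def by auto
  define j0 where "j0 = Min S"
  have "finite S" unfolding S_def by simp
  then have j0S: "j0 \<in> S" and j0_min: "\<And>j'. j' \<in> S \<Longrightarrow> j0 \<le> j'"
    using \<open>j \<in> S\<close> unfolding j0_def by (auto intro: Min_in)
  have "coeff (\<Sum>j=k..n-l. smult (c j) (bernstein n j)) j0 =
        (\<Sum>j=k..n-l. if j = j0 then c j0 * real (n choose j0) else 0)"
    unfolding coeff_sum
  proof (rule sum.cong[OF refl])
    fix j' assume j': "j' \<in> {k..n-l}"
    show "coeff (smult (c j') (bernstein n j')) j0 = (if j' = j0 then c j0 * real (n choose j0) else 0)"
    proof (cases "j' < j0")
      case True
      then have "c j' = 0" using j' j0_min unfolding S_def by force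
      then show ?thesis using True by simp
    next
      case False
      then show ?thesis unfolding bernstein_def by (auto simp: coeff_monom_mult coeff_0_power)
    qed
  qed
  also have "\<dots> = c j0 * real (n choose j0)" using j0S unfolding S_def by simp
  finally have "c j0 * real (n choose j0) = 0" using zero by simp
  moreover have "j0 \<le> n" "c j0 \<noteq> 0"
    using j0S diff_le_self[of n l] unfolding S_def by (auto intro: order.trans)
  ultimately show False by simp
qed

text \<open>The spanning set of \<open>\<Pi>\<^sub>n\<^sup>(\<^sup>k\<^sup>,\<^sup>l\<^sup>)\<close>, \<open>x^k (x-1)^l x^i\<close> (\<open>i \<le> n-k-l\<close>), in the
  Bernstein basis: multiply \<open>x^i = x^i (x + (1-x))^(m-i)\<close> out.\<close>
lemma constrained_monomial_bernstein:
  fixes m k l n i :: nat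
  assumes "i \<le> m" "n = m + k + l"
  shows "[:0,1:]^k * [:-1,1:]^l * monom 1 i =
    (\<Sum>t\<le>m-i. smult ((-1)^l * real (m-i choose t) / real (n choose (k+i+t))) (bernstein n (k+i+t)))"
proof (rule poly_eq_poly_eq_iff[THEN iffD1], rule ext)
  fix x :: real
  have "poly (\<Sum>t\<le>m-i. smult ((-1)^l * real (m-i choose t) / real (n choose (k+i+t))) (bernstein n (k+i+t))) x
     = (\<Sum>t\<le>m-i. (-1)^l * real (m-i choose t) * (x^(k+i) * (1-x)^l) * (x^t * (1-x)^(m-i-t)))"
    unfolding poly_sum
  proof (rule sum.cong[OF refl])
    fix t assume t: "t \<in> {..m-i}"
    have nz: "real (n choose (k+i+t)) \<noteq> 0" using t assms by simp
    have e: "n - (k+i+t) = l + (m-i-t)" using t assms by simp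
    show "poly (smult ((-1)^l * real (m-i choose t) / real (n choose (k+i+t))) (bernstein n (k+i+t))) x =
          (-1)^l * real (m-i choose t) * (x^(k+i) * (1-x)^l) * (x^t * (1-x)^(m-i-t))"
      unfolding bernstein_def e using nz by (simp add: poly_monom power_add field_simps)
  qed
  also have "\<dots> = (-1)^l * (x^(k+i) * (1-x)^l) * (\<Sum>t\<le>m-i. real (m-i choose t) * x^t * (1-x)^(m-i-t))"
    by (simp add: sum_distrib_left mult_ac)
  also have "\<dots> = (-1)^l * (x^(k+i) * (1-x)^l) * (x + (1-x))^(m-i)"
    by (simp only: binomial_ring)
  also have "\<dots> = x^k * (x - 1)^l * x^i"
  proof -
    have "(x - 1)^l = (-1)^l * (1-x)^l" using power_mult_distrib[of "-1" "1-x" l] by simp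
    then show ?thesis by (simp add: power_add)
  qed
  finally show "poly ([:0,1:]^k * [:-1,1:]^l * monom 1 i) x =
    poly (\<Sum>t\<le>m-i. smult ((-1)^l * real (m-i choose t) / real (n choose (k+i+t))) (bernstein n (k+i+t))) x"
    by (simp add: poly_monom)
qed

text \<open>The key uniqueness fact: an element of \<open>\<Pi>\<^sub>n\<^sup>(\<^sup>k\<^sup>,\<^sup>l\<^sup>)\<close> orthogonal to
  \<open>B\<^sup>n\<^sub>k, \<dots>, B\<^sup>n\<^sub>n\<^sub>-\<^sub>l\<close> is orthogonal to all of \<open>\<Pi>\<^sub>n\<^sup>(\<^sup>k\<^sup>,\<^sup>l\<^sup>)\<close>, in particular to itself.\<close>
lemma Pi_space_orthogonal_eq_0:
  fixes \<alpha> \<beta> :: real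
  assumes ab: "\<alpha> > -1" "\<beta> > -1" and kl: "k + l \<le> n" and P: "P \<in> Pi_space n k l"
    and orth: "\<forall>j\<in>{k..n-l}. jac_ip \<alpha> \<beta> P (bernstein n j) = 0"
  shows "P = 0"
proof (rule ccontr)
  assume "P \<noteq> 0"
  with P obtain Q where PQ: "P = [:0,1:]^k * [:-1,1:]^l * Q" and degQ: "degree Q \<le> n - k - l"
    by (rule Pi_space_factor)
  define m where "m = n - k - l"
  have nm: "n = m + k + l" using kl m_def by simp
  have orth_monom: "jacobi_integral \<alpha> \<beta> (P * ([:0,1:]^k * [:-1,1:]^l * monom 1 i)) = 0"
    if "i \<le> m" for i
  proof -
    have "jacobi_integral \<alpha> \<beta> (P * ([:0,1:]^k * [:-1,1:]^l * monom 1 i)) =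
      (\<Sum>t\<le>m-i. ((-1)^l * real (m-i choose t) / real (n choose (k+i+t))) * jac_ip \<alpha> \<beta> P (bernstein n (k+i+t)))"
      unfolding constrained_monomial_bernstein[OF that nm] sum_distrib_left jac_ip_eq_jacobi_integral
      by (simp add: jacobi_integral_sum[OF ab] jacobi_integral_smult)
    also have "\<dots> = 0" using orth that nm by (intro sum.neutral) auto
    finally show ?thesis .
  qed
  have "P * P = P * ([:0,1:]^k * [:-1,1:]^l * (\<Sum>i\<le>degree Q. smult (coeff Q i) (monom 1 i)))"
    by (simp add: smult_monom poly_as_sum_of_monoms PQ[symmetric])
  also have "\<dots> = (\<Sum>i\<le>degree Q. smult (coeff Q i) (P * ([:0,1:]^k * [:-1,1:]^l * monom 1 i)))"
    by (simp add: sum_distrib_left mult_ac)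
  finally have "P * P = (\<Sum>i\<le>degree Q. smult (coeff Q i) (P * ([:0,1:]^k * [:-1,1:]^l * monom 1 i)))" .
  then have "jacobi_integral \<alpha> \<beta> (P * P) = 0"
    using orth_monom degQ unfolding m_def
    by (simp add: jacobi_integral_sum[OF ab] jacobi_integral_smult)
  then show False using jacobi_integral_square_eq_0[OF ab] \<open>P \<noteq> 0\<close> by blast
qed

text \<open>The Bezier coefficients of \<open>D\<^sub>k\<close> are, up to normalisation, the weights below
  (with \<open>a = \<alpha>+2l+1\<close>, \<open>b = \<beta>+2k+1\<close>, \<open>m = n-k-l\<close>). Their duality with the Bernstein
  basis is the pair of identities \<open>dual_weight_sum_vanishes\<close> and
  \<open>dual_weight_sum_0\<close>, both consequences of \<open>\<Delta>\<^sup>m\<close> annihilating low-degree polynomials.\<close>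
definition dual_weight :: "real \<Rightarrow> real \<Rightarrow> nat \<Rightarrow> nat \<Rightarrow> real" where
  "dual_weight a b m p =
     (-1)^p * real (m choose p) * pochhammer (a + real m - real p) p / pochhammer (b + 1) p"

lemma pochhammer_affine_poly:
  "poly (\<Prod>i<r. [:c + real i, d:]) x = pochhammer (c + d * x) r"
  "degree (\<Prod>i<r. [:c + real i, d:]) \<le> r"
proof -
  show "poly (\<Prod>i<r. [:c + real i, d:]) x = pochhammer (c + d * x) r"
    by (simp add: poly_prod pochhammer_prod atLeast0LessThan algebra_simps)
  have "degree (\<Prod>i<r. [:c + real i, d:]) \<le> (\<Sum>i<r. degree [:c + real i, d:])"
    using degree_prod_sum_le[of "{..<r}" "\<lambda>i. [:c + real i, d:]"] by (simp add: o_def)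
  also have "\<dots> \<le> (\<Sum>i<r. 1)" by (intro sum_mono) simp
  finally show "degree (\<Prod>i<r. [:c + real i, d:]) \<le> r" by simp
qed

lemma dual_weight_times_pochhammer:
  assumes "p \<le> m" "q \<le> m"
  shows "dual_weight a b m p * pochhammer a (2*m - (p+q)) =
         (-1)^p * real (m choose p) * pochhammer a m * pochhammer (a + real m - real p) (m - q)
           / pochhammer (b + 1) p"
proof -
  have split: "2*m - (p+q) = (m-p) + (m-q)" using assms by simp
  have tail: "pochhammer a (2*m - (p+q)) = pochhammer a (m-p) * pochhammer (a + real m - real p) (m-q)"
    unfolding split pochhammer_product' using assms by (simp add: of_nat_diff algebra_simps)
  have "pochhammer a m = pochhammer a (m-p) * pochhammer (a + real m - real p) p"
    using pochhammer_product'[of a "m-p" p] assms by (simp add: of_nat_diff add_diff_eq)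
  then show ?thesis unfolding dual_weight_def tail by (simp add: field_simps)
qed

lemma dual_weight_sum_vanishes:
  fixes a b :: real
  assumes "a > 0" "b > 0" "1 \<le> q" "q \<le> m"
  shows "(\<Sum>p\<le>m. dual_weight a b m p * pochhammer b (p+q) * pochhammer a (2*m - (p+q))) = 0"
proof -
  text \<open>After cancelling \<open>(b+1)_p\<close>, the summand is \<open>(-1)^p (m choose p) F(p)\<close> with
    \<open>F(p) = (a+m-p)_{m-q} (b+1+p)_{q-1}\<close> of degree \<open>m-1\<close>.\<close>
  define F where "F = (\<Prod>i<m-q. [:(a + real m) + real i, -1:]) * (\<Prod>i<q-1. [:(b + 1) + real i, 1:])"
  have "degree F \<le> (m - q) + (q - 1)" unfolding F_def
    by (rule order.trans[OF degree_mult_le]) (intro add_mono pochhammer_affine_poly(2))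
  then have degF: "degree F < m" using assms by simp
  have summand: "dual_weight a b m p * pochhammer b (p+q) * pochhammer a (2*m - (p+q)) =
              b * pochhammer a m * ((-1)^p * real (m choose p) * poly F (real p))" if p: "p \<le> m" for p
  proof -
    have "p + q = Suc (p + (q-1))" using assms by simp
    then have "pochhammer b (p+q) = b * pochhammer (b+1) p * pochhammer (b + 1 + real p) (q-1)"
      by (simp only: pochhammer_rec pochhammer_product')
    moreover have "pochhammer (b+1) p > 0" using assms by (intro pochhammer_pos) simp
    ultimately show ?thesis
      using dual_weight_times_pochhammer[where a=a and b=b, OF p assms(4)]
      unfolding F_def poly_mult pochhammer_affine_poly(1) by (simp add: field_simps)
  qed
  have "(\<Sum>p\<le>m. dual_weight a b m p * pochhammer b (p+q) * pochhammer a (2*m - (p+q))) =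
        b * pochhammer a m * (\<Sum>p\<le>m. (-1)^p * real (m choose p) * poly F (real p))"
    by (simp add: summand sum_distrib_left)
  then show ?thesis using finite_difference_poly_vanishes[of F m] degF by simp
qed

lemma dual_weight_sum_0:
  fixes a b :: real
  assumes "a > 0" "b > 0"
  shows "(\<Sum>p\<le>m. dual_weight a b m p * pochhammer b p * pochhammer a (2*m - p)) =
          pochhammer a m * pochhammer (a + b + real m) m * fact m / pochhammer (b + 1) m"
proof -
  text \<open>Here the summand is \<open>(-1)^p (m choose p) G(p) / (b+p)\<close> with \<open>G(p) = (a+m-p)_m\<close>;
    dividing \<open>G\<close> by \<open>x + b\<close> splits it into a low-degree part and the partial fraction
    \<open>G(-b)/(b+p)\<close>.\<close>
  define G where "G = (\<Prod>i<m. [:(a + real m) + real i, -1:])"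
  define H where "H = synthetic_div G (-b)"
  have GH: "G = [:b, 1:] * H + [:poly G (-b):]"
    unfolding H_def using synthetic_div_correct'[of "-b" G] by simp
  have "degree G \<le> m" unfolding G_def by (rule pochhammer_affine_poly(2))
  then have degH: "H = 0 \<or> degree H < m"
    unfolding H_def by (cases "degree G = 0") (auto simp: synthetic_div_eq_0_iff degree_synthetic_div)
  have G_at_b: "poly G (-b) = pochhammer (a + b + real m) m"
    unfolding G_def pochhammer_affine_poly(1) by (simp add: algebra_simps)
  have summand: "dual_weight a b m p * pochhammer b p * pochhammer a (2*m - p) =
              b * pochhammer a m * ((-1)^p * real (m choose p) * poly H (real p)
                 + poly G (-b) * ((-1)^p * real (m choose p) * (1 / (b + real p))))"
    if p: "p \<le> m" for p
  proof -
    have pos: "pochhammer (b+1) p > 0" "b + real p > 0" using assms by (auto intro: pochhammer_pos)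
    have "pochhammer b p * (b + real p) = b * pochhammer (b+1) p"
      by (metis pochhammer_Suc pochhammer_rec)
    then have rise: "pochhammer b p = b * pochhammer (b+1) p / (b + real p)"
      using pos by (simp add: field_simps)
    have "pochhammer (a + real m - real p) m = poly G (real p)"
      unfolding G_def pochhammer_affine_poly(1) by simp
    also have "\<dots> = (b + real p) * poly H (real p) + poly G (-b)"
      by (subst (1) GH) (simp add: algebra_simps)
    finally have division: "pochhammer (a + real m - real p) m = (b + real p) * poly H (real p) + poly G (-b)" .
    have key: "dual_weight a b m p * pochhammer a (2*m - p) =
          (-1)^p * real (m choose p) * pochhammer a m * ((b + real p) * poly H (real p) + poly G (-b))
            / pochhammer (b + 1) p"
      using dual_weight_times_pochhammer[where q=0, OF p le0] by (simp only: add_0_right diff_zero division)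
    have cancel: "s * A * (d * h + g) / P * (b * P / d) = b * A * (s * h + g * (s * (1 / d)))"
      if "P \<noteq> 0" "d \<noteq> 0" for s A d h g P :: real
      using that by (simp add: field_simps)
    have "dual_weight a b m p * pochhammer b p * pochhammer a (2*m - p) =
          (dual_weight a b m p * pochhammer a (2*m - p)) * pochhammer b p"
      by (simp only: ac_simps)
    then show ?thesis unfolding key rise using pos by (simp only: cancel)
  qed
  have "(\<Sum>p\<le>m. dual_weight a b m p * pochhammer b p * pochhammer a (2*m - p)) =
        b * pochhammer a m * ((\<Sum>p\<le>m. (-1)^p * real (m choose p) * poly H (real p))
           + poly G (-b) * (\<Sum>p\<le>m. (-1)^p * real (m choose p) * (1 / (b + real p))))"
    by (simp add: summand sum.distrib sum_distrib_left distrib_left)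
  also have "\<dots> = b * pochhammer a m * (poly G (-b) * (fact m / pochhammer b (Suc m)))"
    unfolding finite_difference_poly_vanishes[OF degH] alternating_binomial_sum_reciprocal[OF assms(2)]
    by simp
  also have "pochhammer b (Suc m) = b * pochhammer (b+1) m" by (rule pochhammer_rec)
  finally show ?thesis using assms unfolding G_at_b by (simp add: field_simps)
qed

definition dual_norm :: "real \<Rightarrow> real \<Rightarrow> nat \<Rightarrow> nat \<Rightarrow> nat \<Rightarrow> real" where
  "dual_norm \<alpha> \<beta> n k l =
     (let a = \<alpha> + 2 * real l + 1; b = \<beta> + 2 * real k + 1; m = n - k - l in
      pochhammer (a + b) m * pochhammer (b + 1) m
        / (real (n choose k) * Beta a b * pochhammer a m * fact m))"

definition explicit_dual_coeff :: "real \<Rightarrow> real \<Rightarrow> nat \<Rightarrow> nat \<Rightarrow> nat \<Rightarrow> nat \<Rightarrow> real" where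
  "explicit_dual_coeff \<alpha> \<beta> n k l j =
     (if j \<in> {k..n-l} then
        dual_norm \<alpha> \<beta> n k l * dual_weight (\<alpha> + 2 * real l + 1) (\<beta> + 2 * real k + 1) (n-k-l) (j-k)
          / real (n choose j)
      else 0)"

definition explicit_dual :: "real \<Rightarrow> real \<Rightarrow> nat \<Rightarrow> nat \<Rightarrow> nat \<Rightarrow> real poly" where
  "explicit_dual \<alpha> \<beta> n k l = (\<Sum>j=k..n-l. smult (explicit_dual_coeff \<alpha> \<beta> n k l j) (bernstein n j))"

lemma jac_ip_bernstein_pochhammer:
  fixes \<alpha> \<beta> :: real
  assumes ab: "\<alpha> > -1" "\<beta> > -1" and n: "n = m + k + l" and pq: "p \<le> m" "q \<le> m"
  defines "a \<equiv> \<alpha> + 2 * real l + 1" and "b \<equiv> \<beta> + 2 * real k + 1"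
  shows "jac_ip \<alpha> \<beta> (bernstein n (k+p)) (bernstein n (k+q)) =
         real (n choose (k+p)) * real (n choose (k+q)) * Beta b a
           * pochhammer b (p+q) * pochhammer a (2*m - (p+q)) / pochhammer (b + a) (2*m)"
proof -
  have "a > 0" "b > 0" using ab by (auto simp: a_def b_def)
  have left: "\<beta> + real (k + p + (k + q)) + 1 = b + real (p+q)" unfolding b_def by simp
  have "2 * n - (k + p) - (k + q) = 2 * l + (2*m - (p+q))" using n pq by auto
  then have right: "\<alpha> + real (2 * n - (k + p) - (k + q)) + 1 = a + real (2*m - (p+q))"
    unfolding a_def by simp
  have total: "p + q + (2*m - (p+q)) = 2*m" using pq by simp
  have "jac_ip \<alpha> \<beta> (bernstein n (k+p)) (bernstein n (k+q)) = real (n choose (k+p)) * real (n choose (k+q))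
          * Beta (\<beta> + real (k + p + (k + q)) + 1) (\<alpha> + real (2 * n - (k + p) - (k + q)) + 1)"
    using n pq by (intro jac_ip_bernstein[OF ab]) simp_all
  also have "\<dots> = real (n choose (k+p)) * real (n choose (k+q)) * Beta (b + real (p+q)) (a + real (2*m - (p+q)))"
    by (simp only: left right)
  also have "\<dots> = real (n choose (k+p)) * real (n choose (k+q)) * Beta b a
           * pochhammer b (p+q) * pochhammer a (2*m - (p+q)) / pochhammer (b + a) (2*m)"
    unfolding Beta_shift_nat[OF \<open>b > 0\<close> \<open>a > 0\<close>] total by simp
  finally show ?thesis .
qed

lemma jac_ip_explicit_dual:
  fixes \<alpha> \<beta> :: real
  assumes ab: "\<alpha> > -1" "\<beta> > -1" and kl: "k + l \<le> n" and q: "q \<le> n - k - l"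
  shows "jac_ip \<alpha> \<beta> (explicit_dual \<alpha> \<beta> n k l) (bernstein n (k+q)) = (if q = 0 then 1 else 0)"
proof -
  define m where "m = n - k - l"
  define a where "a = \<alpha> + 2 * real l + 1"
  define b where "b = \<beta> + 2 * real k + 1"
  define E where "E = dual_norm \<alpha> \<beta> n k l"
  define K where "K = real (n choose (k+q)) * E * Beta b a / pochhammer (b + a) (2*m)"
  have n: "n = m + k + l" using kl m_def by simp
  have "a > 0" "b > 0" using ab by (auto simp: a_def b_def)
  have qm: "q \<le> m" using q m_def by simp
  have "jac_ip \<alpha> \<beta> (explicit_dual \<alpha> \<beta> n k l) (bernstein n (k+q)) =
        (\<Sum>j=k..n-l. explicit_dual_coeff \<alpha> \<beta> n k l j * jac_ip \<alpha> \<beta> (bernstein n j) (bernstein n (k+q)))"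
    unfolding explicit_dual_def jac_ip_eq_jacobi_integral sum_distrib_right
    by (simp add: jacobi_integral_sum[OF ab] jacobi_integral_smult)
  also have "\<dots> = (\<Sum>p\<le>m. explicit_dual_coeff \<alpha> \<beta> n k l (k+p) * jac_ip \<alpha> \<beta> (bernstein n (k+p)) (bernstein n (k+q)))"
    using sum.atLeastAtMost_shift_bounds[of _ 0 k m] n
    by (simp add: atMost_atLeast0 add.commute)
  also have "\<dots> = K * (\<Sum>p\<le>m. dual_weight a b m p * pochhammer b (p+q) * pochhammer a (2*m - (p+q)))"
    unfolding sum_distrib_left
  proof (rule sum.cong[OF refl])
    fix p assume "p \<in> {..m}"
    then have p: "p \<le> m" by simp
    have "explicit_dual_coeff \<alpha> \<beta> n k l (k+p) * real (n choose (k+p)) = E * dual_weight a b m p"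
      using p n unfolding explicit_dual_coeff_def E_def a_def b_def m_def by auto
    then show "explicit_dual_coeff \<alpha> \<beta> n k l (k+p) * jac_ip \<alpha> \<beta> (bernstein n (k+p)) (bernstein n (k+q)) =
          K * (dual_weight a b m p * pochhammer b (p+q) * pochhammer a (2*m - (p+q)))"
      unfolding jac_ip_bernstein_pochhammer[OF ab n p qm] K_def a_def[symmetric] b_def[symmetric]
      by (simp add: field_simps)
  qed
  also have "\<dots> = (if q = 0 then 1 else 0)"
  proof (cases "q = 0")
    case False
    then show ?thesis using dual_weight_sum_vanishes[OF \<open>a > 0\<close> \<open>b > 0\<close>, of q m] qm by simp
  next
    case True
    have P2: "pochhammer (b + a) (2*m) = pochhammer (a + b) m * pochhammer (a + b + real m) m"
      using pochhammer_product'[of "a + b" m m] by (simp add: mult_2 add.commute)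
    have E: "E = pochhammer (a + b) m * pochhammer (b + 1) m
                 / (real (n choose k) * Beta a b * pochhammer a m * fact m)"
      unfolding E_def dual_norm_def a_def b_def m_def Let_def ..
    have "real (n choose k) > 0" "Beta a b > 0" "pochhammer a m > 0" "pochhammer (b+1) m > 0"
      "pochhammer (a + b) m > 0" "pochhammer (a + b + real m) m > 0" "(fact m :: real) > 0"
      using \<open>a > 0\<close> \<open>b > 0\<close> kl by (auto intro!: pochhammer_pos Beta_pos_real)
    moreover have "(\<Sum>p\<le>m. dual_weight a b m p * pochhammer b (p+q) * pochhammer a (2*m - (p+q))) =
          pochhammer a m * pochhammer (a + b + real m) m * fact m / pochhammer (b + 1) m"
      using dual_weight_sum_0[OF \<open>a > 0\<close> \<open>b > 0\<close>, of m] True by simp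
    ultimately show ?thesis using True
      unfolding K_def E
        Beta_commute[of b a] P2 by (simp add: field_simps)
  qed
  finally show ?thesis .
qed

lemma explicit_dual_in_Pi_space:
  assumes "k + l \<le> n"
  shows "explicit_dual \<alpha> \<beta> n k l \<in> Pi_space n k l"
  unfolding explicit_dual_def using assms
  by (intro Pi_space_sum Pi_space_smult bernstein_in_Pi_space) auto

lemma dual_bernstein_eq_explicit:
  fixes \<alpha> \<beta> :: real
  assumes ab: "\<alpha> > -1" "\<beta> > -1" and kl: "k + l \<le> n"
  shows "dual_bernstein n k l \<alpha> \<beta> k = explicit_dual \<alpha> \<beta> n k l"
  unfolding dual_bernstein_def
proof (rule the_equality)
  have dual: "jac_ip \<alpha> \<beta> (explicit_dual \<alpha> \<beta> n k l) (bernstein n j) = (if k = j then 1 else 0)"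
    if "j \<in> {k..n-l}" for j
    using jac_ip_explicit_dual[OF ab kl, of "j - k"] that by auto
  then show "explicit_dual \<alpha> \<beta> n k l \<in> Pi_space n k l \<and>
      (\<forall>j\<in>{k..n-l}. jac_ip \<alpha> \<beta> (explicit_dual \<alpha> \<beta> n k l) (bernstein n j) = (if k = j then 1 else 0))"
    using explicit_dual_in_Pi_space[OF kl] by blast
  fix P
  assume P: "P \<in> Pi_space n k l \<and>
      (\<forall>j\<in>{k..n-l}. jac_ip \<alpha> \<beta> P (bernstein n j) = (if k = j then 1 else 0))"
  have "P - explicit_dual \<alpha> \<beta> n k l = 0"
  proof (rule Pi_space_orthogonal_eq_0[OF ab kl])
    show "P - explicit_dual \<alpha> \<beta> n k l \<in> Pi_space n k l"
      using P explicit_dual_in_Pi_space[OF kl] by (intro Pi_space_diff) auto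
    show "\<forall>j\<in>{k..n-l}. jac_ip \<alpha> \<beta> (P - explicit_dual \<alpha> \<beta> n k l) (bernstein n j) = 0"
    proof
      fix j assume j: "j \<in> {k..n-l}"
      have "jac_ip \<alpha> \<beta> (P - explicit_dual \<alpha> \<beta> n k l) (bernstein n j) =
            jac_ip \<alpha> \<beta> P (bernstein n j) - jac_ip \<alpha> \<beta> (explicit_dual \<alpha> \<beta> n k l) (bernstein n j)"
        unfolding jac_ip_eq_jacobi_integral left_diff_distrib by (rule jacobi_integral_diff[OF ab])
      then show "jac_ip \<alpha> \<beta> (P - explicit_dual \<alpha> \<beta> n k l) (bernstein n j) = 0"
        using P dual[OF j] j by simp
    qed
  qed
  then show "P = explicit_dual \<alpha> \<beta> n k l" by simp
qed

lemma dual_coeff_eq_explicit: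
  fixes \<alpha> \<beta> :: real
  assumes "\<alpha> > -1" "\<beta> > -1" "k + l \<le> n"
  shows "dual_coeff n k l \<alpha> \<beta> k = explicit_dual_coeff \<alpha> \<beta> n k l"
  unfolding dual_coeff_def dual_bernstein_eq_explicit[OF assms]
proof (rule the_equality)
  show "(\<forall>j. j \<notin> {k..n-l} \<longrightarrow> explicit_dual_coeff \<alpha> \<beta> n k l j = 0) \<and>
        explicit_dual \<alpha> \<beta> n k l = (\<Sum>j=k..n-l. smult (explicit_dual_coeff \<alpha> \<beta> n k l j) (bernstein n j))"
    unfolding explicit_dual_def explicit_dual_coeff_def by simp
  fix c
  assume c: "(\<forall>j. j \<notin> {k..n-l} \<longrightarrow> c j = 0) \<and>
             explicit_dual \<alpha> \<beta> n k l = (\<Sum>j=k..n-l. smult (c j) (bernstein n j))"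
  have "(\<Sum>j=k..n-l. smult (c j - explicit_dual_coeff \<alpha> \<beta> n k l j) (bernstein n j)) =
        (\<Sum>j=k..n-l. smult (c j) (bernstein n j)) - explicit_dual \<alpha> \<beta> n k l"
    unfolding explicit_dual_def by (simp add: smult_diff_left sum_subtractf)
  then have zero: "(\<Sum>j=k..n-l. smult (c j - explicit_dual_coeff \<alpha> \<beta> n k l j) (bernstein n j)) = 0"
    using c by simp
  have supp: "\<forall>j. j \<notin> {k..n-l} \<longrightarrow> c j - explicit_dual_coeff \<alpha> \<beta> n k l j = 0"
    using c unfolding explicit_dual_coeff_def by auto
  show "c = explicit_dual_coeff \<alpha> \<beta> n k l"
  proof
    fix j
    show "c j = explicit_dual_coeff \<alpha> \<beta> n k l j"
      using bernstein_combination_eq_0[OF supp zero, of j] by simp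
  qed
qed

lemma explicit_dual_coeff_last:
  fixes \<alpha> \<beta> :: real
  assumes ab: "\<alpha> > -1" "\<beta> > -1" and kl: "k + l \<le> n"
  defines "a \<equiv> \<alpha> + 2 * real l + 1" and "b \<equiv> \<beta> + 2 * real k + 1" and "m \<equiv> n - k - l"
  shows "explicit_dual_coeff \<alpha> \<beta> n k l (n - l) =
         (-1)^m * pochhammer (a + b) m / (real (n choose k) * real (n choose l) * Beta a b * fact m)"
proof -
  have "a > 0" "b > 0" using ab by (auto simp: a_def b_def)
  have norm: "dual_norm \<alpha> \<beta> n k l = pochhammer (a + b) m * pochhammer (b + 1) m
                 / (real (n choose k) * Beta a b * pochhammer a m * fact m)"
    unfolding dual_norm_def a_def b_def m_def Let_def ..
  have weight: "dual_weight a b m m = (-1)^m * pochhammer a m / pochhammer (b + 1) m"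
    unfolding dual_weight_def by simp
  have "explicit_dual_coeff \<alpha> \<beta> n k l (n - l) = dual_norm \<alpha> \<beta> n k l * dual_weight a b m m / real (n choose l)"
    using kl binomial_symmetric[of l n] unfolding explicit_dual_coeff_def a_def b_def m_def
    by (simp add: add.commute)
  also have "\<dots> = (-1)^m * pochhammer (a + b) m / (real (n choose k) * real (n choose l) * Beta a b * fact m)"
  proof -
    have "real (n choose k) > 0" "real (n choose l) > 0" "Beta a b > 0" "pochhammer a m > 0"
      "pochhammer (b+1) m > 0" "(fact m :: real) > 0"
      using \<open>a > 0\<close> \<open>b > 0\<close> kl by (auto intro!: pochhammer_pos Beta_pos_real)
    then show ?thesis unfolding norm weight by (simp add: field_simps)
  qed
  finally show ?thesis .
qed

lemma choose_Suc_mult: "(n choose Suc k) * Suc k = (n choose k) * (n - k)"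
  using binomial_absorption[of k n] binomial_absorb_comp[of n k] by (simp add: mult.commute)

lemma dual_weight_Suc:
  fixes a b :: real
  assumes "b > 0"
  shows "dual_weight a b m (Suc p) =
         - dual_weight a b m p * (real (m - p) * (a + real m - real p - 1)) / ((real p + 1) * (b + real p + 1))"
proof -
  have binom: "real (m choose Suc p) = real (m choose p) * real (m - p) / (real p + 1)"
    using choose_Suc_mult[of m p] by (simp add: field_simps flip: of_nat_mult)
  have rise_a: "pochhammer (a + real m - real (Suc p)) (Suc p) =
                (a + real m - real p - 1) * pochhammer (a + real m - real p) p"
    by (simp add: pochhammer_rec algebra_simps)
  have rise_b: "pochhammer (b + 1) (Suc p) = pochhammer (b + 1) p * (b + real p + 1)"
    by (simp add: pochhammer_Suc algebra_simps)
  have "pochhammer (b+1) p > 0" "b + real p + 1 > 0" using assms by (auto intro: pochhammer_pos)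
  then show ?thesis unfolding dual_weight_def binom rise_a rise_b by (simp add: field_simps)
qed

lemma explicit_dual_coeff_step:
  fixes \<alpha> \<beta> :: real
  assumes ab: "\<alpha> > -1" "\<beta> > -1" and j: "k \<le> j" "j < n - l"
  shows "explicit_dual_coeff \<alpha> \<beta> n k l j =
           ((real j - real n) * (real j - real k + 1) * (real j + \<beta> + real k + 2))
           / ((real j + 1) * (real j - real n + real l) * (real j - \<alpha> - real l - real n))
           * explicit_dual_coeff \<alpha> \<beta> n k l (j + 1)"
proof -
  define m where "m = n - k - l"
  define a where "a = \<alpha> + 2 * real l + 1"
  define b where "b = \<beta> + 2 * real k + 1"
  define E where "E = dual_norm \<alpha> \<beta> n k l"
  define p where "p = j - k"
  have "b > 0" using ab by (simp add: b_def)
  have p: "j = k + p" "p < m" and "Suc j - k = Suc p" using j unfolding p_def m_def by auto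
  have coeff_j: "explicit_dual_coeff \<alpha> \<beta> n k l j = E * dual_weight a b m p / real (n choose j)"
    using j unfolding explicit_dual_coeff_def E_def a_def b_def m_def p_def by simp
  have coeff_Suc: "explicit_dual_coeff \<alpha> \<beta> n k l (j + 1) = E * dual_weight a b m (Suc p) / real (n choose Suc j)"
    using j \<open>Suc j - k = Suc p\<close> unfolding explicit_dual_coeff_def E_def a_def b_def m_def by simp
  have "real ((n choose Suc j) * Suc j) = real ((n choose j) * (n - j))"
    by (simp only: choose_Suc_mult)
  then have "real (n choose Suc j) * (real j + 1) = real (n choose j) * (- (real j - real n))"
    using j by (simp add: of_nat_diff algebra_simps)
  then have binom: "real (n choose Suc j) = real (n choose j) * (- (real j - real n)) / (real j + 1)"
    by (simp add: eq_divide_eq)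
  have weight: "dual_weight a b m (Suc p) = - dual_weight a b m p
      * ((- (real j - real n + real l)) * (- (real j - \<alpha> - real l - real n)))
      / ((real j - real k + 1) * (real j + \<beta> + real k + 2))"
    unfolding dual_weight_Suc[OF \<open>b > 0\<close>] using p j
    by (simp add: m_def a_def b_def of_nat_diff algebra_simps)
  have nonzero: "real j - real n \<noteq> 0" "real j - real n + real l \<noteq> 0" "real j - \<alpha> - real l - real n \<noteq> 0"
    "real j - real k + 1 \<noteq> 0" "real j + \<beta> + real k + 2 \<noteq> 0" "real j + 1 \<noteq> 0" "real (n choose j) \<noteq> 0"
    using j ab by auto
  have cancel: "E' * e / C = u * y * z / (w * v * t) * (E' * (- e * ((- v) * (- t)) / (y * z)) / (C * (- u) / w))"
    if "u \<noteq> 0" "v \<noteq> 0" "t \<noteq> 0" "y \<noteq> 0" "z \<noteq> 0" "w \<noteq> 0" "C \<noteq> 0" for E' e C u v t y z w :: real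
    using that by (simp add: field_simps)
  show ?thesis unfolding coeff_j coeff_Suc binom weight by (rule cancel[OF nonzero])
qed

theorem mainTheorem4:
  fixes n k l :: nat and \<alpha> \<beta> \<sigma> :: real
  assumes "k + l \<le> n" and "\<alpha> > -1" and "\<beta> > -1" and "\<sigma> = \<alpha> + \<beta> + 1"
  shows "dual_coeff n k l \<alpha> \<beta> k (n - l) =
           (-1) ^ (n - k - l) * pochhammer (\<sigma> + 2 * real k + 2 * real l + 1) (n - k - l)
           / (real (n choose k) * real (n choose l) * Beta (\<alpha> + 2 * real l + 1) (\<beta> + 2 * real k + 1)
              * fact (n - k - l))
       \<and> (\<forall>j. k \<le> j \<and> j < n - l \<longrightarrow>
           dual_coeff n k l \<alpha> \<beta> k j =
             ((real j - real n) * (real j - real k + 1) * (real j + \<beta> + real k + 2))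
             / ((real j + 1) * (real j - real n + real l) * (real j - \<alpha> - real l - real n))
             * dual_coeff n k l \<alpha> \<beta> k (j + 1))"
proof -
  have coeff: "dual_coeff n k l \<alpha> \<beta> k = explicit_dual_coeff \<alpha> \<beta> n k l"
    by (rule dual_coeff_eq_explicit[OF assms(2,3,1)])
  have sigma: "\<sigma> + 2 * real k + 2 * real l + 1 = (\<alpha> + 2 * real l + 1) + (\<beta> + 2 * real k + 1)"
    using assms(4) by simp
  show ?thesis
    unfolding coeff sigma
    using explicit_dual_coeff_last[OF assms(2,3,1)] explicit_dual_coeff_step[OF assms(2,3)] by blast
qed

end
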